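(* Let $\Gamma_i\in\mathbb{R}^{m\times m}$ with $\|\Gamma_i\|_2\le1$ for all $i\in[n]$, where $\|\cdot\|_2$ is the matrix operator norm. Let $\mathbf{P}\in\mathbb{R}^{nm\times nm}$ have $n^2$ blocks such that the $(i,j)$th block is $\Gamma_i\Gamma_j^\top$ if $i\ne j$, and $I$ otherwise. Then $\mathbf{P}\succeq0$ and $\|\mathbf{P}\|_*\le mn$, where $\|\cdot\|_*$ denotes the nuclear norm. *)

theory Defs
  imports Complex_Main "Jordan_Normal_Form.Char_Poly" "HOL-Computational_Algebra.Polynomial"
begin

definition euclid_norm :: "real vec \<Rightarrow> real" where
  "euclid_norm v = sqrt (\<Sum>i<dim_vec v. (v $ i)^2)"

definition op_norm2 :: "real mat \<Rightarrow> real" where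
  "op_norm2 A = Sup {euclid_norm (A *\<^sub>v x) | x. x \<in> carrier_vec (dim_col A) \<and> euclid_norm x \<le> 1}"

text \<open>Singular values (with multiplicity): square roots of the eigenvalues of A^T A,
  i.e. of the roots of its characteristic polynomial.\<close>
definition singular_values :: "real mat \<Rightarrow> real multiset" where
  "singular_values A = image_mset sqrt (proots (char_poly (transpose_mat A * A)))"

definition nuclear_norm :: "real mat \<Rightarrow> real" where
  "nuclear_norm A = sum_mset (singular_values A)"

definition psd :: "real mat \<Rightarrow> bool" where
  "psd P \<longleftrightarrow> P \<in> carrier_mat (dim_row P) (dim_row P) \<and> transpose_mat P = P \<and>
     (\<forall>x \<in> carrier_vec (dim_row P). x \<bullet> (P *\<^sub>v x) \<ge> 0)"

text \<open>The nm x nm block matrix whose (i,j) block (0-based, i,j < n) is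
  Gamma_i Gamma_j^T for i \<noteq> j and the m x m identity for i = j.\<close>
definition block_P :: "nat \<Rightarrow> nat \<Rightarrow> (nat \<Rightarrow> real mat) \<Rightarrow> real mat" where
  "block_P n m \<Gamma> = mat (n*m) (n*m) (\<lambda>(r,c).
     let i = r div m; a = r mod m; j = c div m; b = c mod m in
     if i = j then (1\<^sub>m m) $$ (a,b) else (\<Gamma> i * transpose_mat (\<Gamma> j)) $$ (a,b))"

end

theory Submission
  imports Defs "Jordan_Normal_Form.Schur_Decomposition"
begin

(* Let S be the nm x m matrix obtained by stacking Gamma_1, ..., Gamma_n on top of each other.
   Then P = S S^T + diag(I - Gamma_1 Gamma_1^T, ..., I - Gamma_n Gamma_n^T), and both summands
   are positive semidefinite, the second one because ||Gamma_i^T|| = ||Gamma_i|| <= 1.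
   For a positive semidefinite matrix A the singular values are the eigenvalues: a Schur
   triangularisation A = Q B Q^-1 turns A^T A = A^2 into Q B^2 Q^-1, whose characteristic
   polynomial has the squared eigenvalues as roots. Hence the nuclear norm of P is its trace,
   which is nm because all diagonal blocks of P are identities. *)

section \<open>Positive semidefinite matrices\<close>

lemma scalar_prod_self_nonneg:
  fixes v :: "real vec"
  shows "0 \<le> v \<bullet> v"
  using conjugate_square_ge_0_vec[of v] by simp

lemma psdI:
  assumes "P \<in> carrier_mat n n" and "transpose_mat P = P"
    and "\<And>x. x \<in> carrier_vec n \<Longrightarrow> 0 \<le> x \<bullet> (P *\<^sub>v x)"
  shows "psd P"
  using assms unfolding psd_def by auto

lemma psdD:
  assumes "psd P"
  shows "dim_col P = dim_row P" and "transpose_mat P = P"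
    and "\<And>x. x \<in> carrier_vec (dim_row P) \<Longrightarrow> 0 \<le> x \<bullet> (P *\<^sub>v x)"
  using assms unfolding psd_def by auto

lemma psd_add:
  assumes A: "psd A" and B: "psd B" and dim: "dim_row B = dim_row A"
  shows "psd (A + B)"
proof -
  define n where "n = dim_row A"
  have carr: "A \<in> carrier_mat n n" "B \<in> carrier_mat n n"
    using psdD(1)[OF A] psdD(1)[OF B] dim unfolding n_def carrier_mat_def by simp_all
  show ?thesis
  proof (rule psdI)
    show "A + B \<in> carrier_mat n n"
      using carr by simp
    show "transpose_mat (A + B) = A + B"
      using carr psdD(2)[OF A] psdD(2)[OF B] by (simp add: transpose_add)
    fix x :: "real vec" assume x: "x \<in> carrier_vec n"
    have "x \<bullet> ((A + B) *\<^sub>v x) = x \<bullet> (A *\<^sub>v x) + x \<bullet> (B *\<^sub>v x)"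
      unfolding add_mult_distrib_mat_vec[OF carr x]
      by (rule scalar_prod_add_distrib[OF x]) (use carr x in auto)
    then show "0 \<le> x \<bullet> ((A + B) *\<^sub>v x)"
      using psdD(3)[OF A] psdD(3)[OF B] x dim unfolding n_def by simp
  qed
qed

lemma psd_mult_transpose:
  fixes S :: "real mat"
  assumes S: "S \<in> carrier_mat n k"
  shows "psd (S * transpose_mat S)"
proof (rule psdI)
  show "S * transpose_mat S \<in> carrier_mat n n"
    using S by simp
  show "transpose_mat (S * transpose_mat S) = S * transpose_mat S"
    using S by (simp add: transpose_mult[of _ n k])
  fix x :: "real vec" assume x: "x \<in> carrier_vec n"
  have "x \<bullet> (S * transpose_mat S *\<^sub>v x) = x \<bullet> (S *\<^sub>v (transpose_mat S *\<^sub>v x))"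
    using S x by simp
  also have "\<dots> = (transpose_mat S *\<^sub>v x) \<bullet> (transpose_mat S *\<^sub>v x)"
    using S x by (intro transpose_vec_mult_scalar[symmetric]) auto
  finally show "0 \<le> x \<bullet> (S * transpose_mat S *\<^sub>v x)"
    by (simp add: scalar_prod_self_nonneg)
qed

lemma psd_eigenvalue_nonneg:
  assumes psd: "psd A" and ev: "eigenvalue A l"
  shows "l \<ge> 0"
proof -
  obtain x where x: "x \<in> carrier_vec (dim_row A)" "x \<noteq> 0\<^sub>v (dim_row A)"
    and Ax: "A *\<^sub>v x = l \<cdot>\<^sub>v x"
    using ev unfolding eigenvalue_def eigenvector_def by auto
  have "0 \<le> x \<bullet> (A *\<^sub>v x)"
    using psdD(3)[OF psd x(1)] .
  also have "\<dots> = l * (x \<bullet> x)"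
    using x by (simp add: Ax)
  finally show ?thesis
    using conjugate_square_greater_0_vec[OF x(1)] x(2) by (simp add: zero_le_mult_iff)
qed

section \<open>Nuclear norm of positive semidefinite matrices\<close>

definition trace :: "'a::comm_ring_1 mat \<Rightarrow> 'a" where
  "trace A = (\<Sum>i<dim_row A. A $$ (i,i))"

lemma trace_mult_comm:
  fixes X Y :: "'a::comm_ring_1 mat"
  assumes "X \<in> carrier_mat n k" "Y \<in> carrier_mat k n"
  shows "trace (X * Y) = trace (Y * X)"
proof -
  have "trace (X * Y) = (\<Sum>i<n. \<Sum>j<k. X $$ (i,j) * Y $$ (j,i))"
    using assms unfolding trace_def by (intro sum.cong) (auto simp: scalar_prod_def lessThan_atLeast0)
  also have "\<dots> = (\<Sum>j<k. \<Sum>i<n. Y $$ (j,i) * X $$ (i,j))"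
    by (subst sum.swap) (simp add: mult.commute)
  also have "\<dots> = trace (Y * X)"
    using assms unfolding trace_def by (intro sum.cong) (auto simp: scalar_prod_def lessThan_atLeast0)
  finally show ?thesis .
qed

lemma trace_similar_mat_wit:
  fixes A B :: "'a::comm_ring_1 mat"
  assumes A: "A \<in> carrier_mat n n" and wit: "similar_mat_wit A B P Q"
  shows "trace A = trace B"
proof -
  note W = similar_mat_witD2[OF A wit]
  have "trace A = trace ((P * B) * Q)" using W by simp
  also have "\<dots> = trace (Q * (P * B))" using W by (intro trace_mult_comm) auto
  also have "Q * (P * B) = B" using W by (simp add: assoc_mult_mat[symmetric, of Q n n P n B n])
  finally show ?thesis .
qed

lemma upper_triangular_mult:
  fixes B C :: "'a::semiring_0 mat"
  assumes B: "B \<in> carrier_mat n n" "upper_triangular B"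
    and C: "C \<in> carrier_mat n n" "upper_triangular C"
  shows "upper_triangular (B * C)"
    and "i < n \<Longrightarrow> (B * C) $$ (i,i) = B $$ (i,i) * C $$ (i,i)"
proof -
  have entry: "(B * C) $$ (i,j) = (\<Sum>k<n. B $$ (i,k) * C $$ (k,j))" if "i < n" "j < n" for i j
    using B C that by (auto simp: scalar_prod_def lessThan_atLeast0)
  have B0: "B $$ (i,k) = 0" and C0: "C $$ (i,k) = 0" if "k < i" "i < n" for i k
    using B C that by auto
  show "upper_triangular (B * C)"
  proof (rule upper_triangularI)
    fix i j assume "i < dim_row (B * C)" and ji: "j < i"
    then have i: "i < n" using B by simp
    have "B $$ (i,k) * C $$ (k,j) = 0" if "k < n" for k
      using B0 C0 i ji that by (cases "k < i") auto
    then show "(B * C) $$ (i,j) = 0" using i ji by (simp add: entry)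
  qed
  show "(B * C) $$ (i,i) = B $$ (i,i) * C $$ (i,i)" if i: "i < n"
  proof -
    have "(\<Sum>k<n. B $$ (i,k) * C $$ (k,i)) = (\<Sum>k<n. if k = i then B $$ (i,i) * C $$ (i,i) else 0)"
      using B0 C0 i by (intro sum.cong) (auto simp: linorder_neq_iff)
    then show ?thesis using i by (simp add: entry)
  qed
qed

lemma conjugate_mult_mat_vec_of_real:
  fixes A :: "real mat" and v :: "complex vec"
  assumes "A \<in> carrier_mat nr nc" and "v \<in> carrier_vec nc"
  shows "conjugate (map_mat complex_of_real A *\<^sub>v v) = map_mat complex_of_real A *\<^sub>v conjugate v"
  using assms by (intro eq_vecI) (auto simp: scalar_prod_def sum_conjugate conjugate_dist_mul)

lemma eigenvalue_of_real_symmetric_real: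
  fixes A :: "real mat"
  assumes A: "A \<in> carrier_mat n n" and sym: "transpose_mat A = A"
    and ev: "eigenvalue (map_mat complex_of_real A) e"
  shows "e \<in> \<real>"
proof -
  let ?A = "map_mat complex_of_real A"
  obtain v where v: "v \<in> carrier_vec n" "v \<noteq> 0\<^sub>v n" and Av: "?A *\<^sub>v v = e \<cdot>\<^sub>v v"
    using ev A unfolding eigenvalue_def eigenvector_def by auto
  have symA: "transpose_mat ?A = ?A"
    using sym by (simp add: map_mat_transpose)
  have "e * (v \<bullet>c v) = (?A *\<^sub>v v) \<bullet>c v"
    using v by (simp add: Av)
  also have "\<dots> = (transpose_mat ?A *\<^sub>v v) \<bullet> conjugate v"
    by (simp add: symA)
  also have "\<dots> = v \<bullet>c (?A *\<^sub>v v)"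
    using A v by (simp add: transpose_vec_mult_scalar[of _ n n] conjugate_mult_mat_vec_of_real)
  also have "\<dots> = cnj e * (v \<bullet>c v)"
    using v by (simp add: Av conjugate_smult_vec)
  finally have "(e - cnj e) * (v \<bullet>c v) = 0"
    by (simp add: algebra_simps)
  moreover have "v \<bullet>c v \<noteq> 0"
    using v by simp
  ultimately show ?thesis
    by (simp add: Reals_cnj_iff)
qed

lemma char_poly_real_symmetric_splits:
  fixes A :: "real mat"
  assumes A: "A \<in> carrier_mat n n" and sym: "transpose_mat A = A"
  obtains ls where "char_poly A = (\<Prod>l\<leftarrow>ls. [:- l, 1:])"
proof -
  let ?A = "map_mat complex_of_real A"
  interpret of_real_poly: map_poly_inj_comm_ring_hom complex_of_real ..
  obtain es where es: "char_poly ?A = (\<Prod>e\<leftarrow>es. [:- e, 1:])"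
    using char_poly_factorized A by (metis map_carrier_mat)
  have real: "e \<in> \<real>" if "e \<in> set es" for e
  proof -
    have "poly (char_poly ?A) e = 0"
      using that by (simp add: es poly_prod_list)
    then show ?thesis
      using A sym eigenvalue_root_char_poly[of ?A n] eigenvalue_of_real_symmetric_real by auto
  qed
  define ls where "ls = map Re es"
  have "es = map complex_of_real ls"
    unfolding ls_def using real by (induction es) auto
  then have "map_poly complex_of_real (char_poly A)
      = map_poly complex_of_real (\<Prod>l\<leftarrow>ls. [:- l, 1:])"
    by (simp add: of_real_hom.char_poly_hom[OF A, symmetric] es of_real_poly.hom_prod_list o_def)
  then show ?thesis
    using of_real_poly.injectivity that by blast
qed

lemma proots_prod_list_linear:
  fixes xs :: "'a::idom list"
  shows "proots (\<Prod>a\<leftarrow>xs. [:- a, 1:]) = mset xs"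
proof (induction xs)
  case (Cons a xs)
  have "(\<Prod>a\<leftarrow>xs. [:- a, 1:]) \<noteq> 0"
    by auto
  then show ?case
    unfolding list.map prod_list.Cons by (subst proots_mult) (auto simp: Cons.IH)
qed simp

lemma schur_triangularization:
  fixes A :: "'a::conjugatable_ordered_field mat"
  assumes A: "A \<in> carrier_mat n n" and cp: "char_poly A = (\<Prod>l\<leftarrow>ls. [:- l, 1:])"
  obtains B P Q where "similar_mat_wit A B P Q" and "B \<in> carrier_mat n n"
    and "upper_triangular B" and "diag_mat B = ls"
proof -
  obtain B P Q where "schur_decomposition A ls = (B, P, Q)"
    by (cases "schur_decomposition A ls")
  with schur_decomposition[OF A cp] have "similar_mat_wit A B P Q"
    and "upper_triangular B" and "diag_mat B = ls" by auto
  moreover from similar_mat_witD2[OF A this(1)] have "B \<in> carrier_mat n n"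
    by auto
  ultimately show ?thesis
    using that by blast
qed

lemma char_poly_mult_self:
  fixes A :: "'a::conjugatable_ordered_field mat"
  assumes A: "A \<in> carrier_mat n n" and cp: "char_poly A = (\<Prod>l\<leftarrow>ls. [:- l, 1:])"
  shows "char_poly (A * A) = (\<Prod>a\<leftarrow>map (\<lambda>l. l * l) ls. [:- a, 1:])"
proof -
  obtain B P Q where wit: "similar_mat_wit A B P Q" and B: "B \<in> carrier_mat n n"
    and ut: "upper_triangular B" and diag: "diag_mat B = ls"
    using schur_triangularization[OF A cp] .
  have "similar_mat_wit (A * A) (B * B) P Q"
    using similar_mat_wit_pow[OF wit, of 2] A B by (simp add: numeral_2_eq_2)
  then have "char_poly (A * A) = char_poly (B * B)"
    by (intro char_poly_similar) (auto simp: similar_mat_def)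
  also have "diag_mat (B * B) = map (\<lambda>l. l * l) ls"
    using upper_triangular_mult(2)[OF B ut B ut] B unfolding diag[symmetric] by (auto simp: diag_mat_def)
  then have "char_poly (B * B) = (\<Prod>a\<leftarrow>map (\<lambda>l. l * l) ls. [:- a, 1:])"
    using char_poly_upper_triangular[OF mult_carrier_mat[OF B B] upper_triangular_mult(1)[OF B ut B ut]]
    by simp
  finally show ?thesis .
qed

lemma trace_eq_sum_list_eigenvalues:
  fixes A :: "'a::conjugatable_ordered_field mat"
  assumes A: "A \<in> carrier_mat n n" and cp: "char_poly A = (\<Prod>l\<leftarrow>ls. [:- l, 1:])"
  shows "trace A = sum_list ls"
proof -
  obtain B P Q where wit: "similar_mat_wit A B P Q" and B: "B \<in> carrier_mat n n"
    and diag: "diag_mat B = ls"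
    using schur_triangularization[OF A cp] .
  have "trace A = trace B"
    using trace_similar_mat_wit[OF A wit] .
  also have "\<dots> = sum_list ls"
    using B unfolding diag[symmetric] diag_mat_def trace_def
    by (simp add: sum_list_sum_nth atLeast0LessThan)
  finally show ?thesis .
qed

lemma nuclear_norm_psd:
  assumes psd: "psd A"
  shows "nuclear_norm A = trace A"
proof -
  define n where "n = dim_row A"
  have A: "A \<in> carrier_mat n n" and sym: "transpose_mat A = A"
    using psdD(1,2)[OF psd] unfolding n_def carrier_mat_def by simp_all
  obtain ls where cp: "char_poly A = (\<Prod>l\<leftarrow>ls. [:- l, 1:])"
    using char_poly_real_symmetric_splits[OF A sym] .
  have ls_nonneg: "l \<ge> 0" if "l \<in> set ls" for l
  proof -
    have "poly (char_poly A) l = 0"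
      using that by (simp add: cp poly_prod_list)
    then show ?thesis
      using psd_eigenvalue_nonneg[OF psd] eigenvalue_root_char_poly[OF A] by blast
  qed
  have "singular_values A = image_mset sqrt (mset (map (\<lambda>l. l * l) ls))"
    unfolding singular_values_def sym char_poly_mult_self[OF A cp] proots_prod_list_linear ..
  also have "\<dots> = mset ls"
    using ls_nonneg by (induction ls) auto
  finally have "nuclear_norm A = sum_list ls"
    unfolding nuclear_norm_def by (simp add: sum_mset_sum_list)
  also have "\<dots> = trace A"
    using trace_eq_sum_list_eigenvalues[OF A cp] ..
  finally show ?thesis .
qed

section \<open>Operator norm\<close>

lemma euclid_norm_eq_sqrt_scalar_prod: "euclid_norm v = sqrt (v \<bullet> v)"
  unfolding euclid_norm_def scalar_prod_def by (simp add: power2_eq_square atLeast0LessThan)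

lemma euclid_norm_smult: "euclid_norm (c \<cdot>\<^sub>v v) = \<bar>c\<bar> * euclid_norm v"
  unfolding euclid_norm_def by (simp add: power_mult_distrib sum_distrib_left[symmetric] real_sqrt_mult)

lemma abs_index_le_euclid_norm:
  assumes "i < dim_vec v"
  shows "\<bar>v $ i\<bar> \<le> euclid_norm v"
  unfolding euclid_norm_def using assms by (intro real_le_rsqrt) (auto intro: member_le_sum)

lemma bdd_above_op_norm2:
  "bdd_above {euclid_norm (A *\<^sub>v x) | x. x \<in> carrier_vec (dim_col A) \<and> euclid_norm x \<le> 1}"
proof (rule bdd_aboveI)
  fix s assume "s \<in> {euclid_norm (A *\<^sub>v x) | x. x \<in> carrier_vec (dim_col A) \<and> euclid_norm x \<le> 1}"
  then obtain x where x: "x \<in> carrier_vec (dim_col A)" "euclid_norm x \<le> 1"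
    and s: "s = euclid_norm (A *\<^sub>v x)" by blast
  have "\<bar>(A *\<^sub>v x) $ i\<bar> \<le> (\<Sum>j<dim_col A. \<bar>A $$ (i,j)\<bar>)" if "i < dim_row A" for i
  proof -
    have "\<bar>(A *\<^sub>v x) $ i\<bar> \<le> (\<Sum>j<dim_col A. \<bar>A $$ (i,j)\<bar> * \<bar>x $ j\<bar>)"
      using that x by (simp add: scalar_prod_def atLeast0LessThan abs_mult[symmetric])
    also have "\<dots> \<le> (\<Sum>j<dim_col A. \<bar>A $$ (i,j)\<bar>)"
      using x abs_index_le_euclid_norm[of _ x]
      by (intro sum_mono mult_left_le) force+
    finally show ?thesis .
  qed
  then show "s \<le> sqrt (\<Sum>i<dim_row A. (\<Sum>j<dim_col A. \<bar>A $$ (i,j)\<bar>)^2)"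
    unfolding s euclid_norm_def
    by (auto intro!: real_sqrt_le_mono sum_mono simp: power2_le_iff_abs_le sum_nonneg)
qed

lemma euclid_norm_mult_mat_vec_le:
  assumes v: "v \<in> carrier_vec (dim_col A)"
  shows "euclid_norm (A *\<^sub>v v) \<le> op_norm2 A * euclid_norm v"
proof (cases "v = 0\<^sub>v (dim_col A)")
  case True
  then have "A *\<^sub>v v = 0\<^sub>v (dim_row A)"
    by (intro eq_vecI) auto
  then show ?thesis
    using True by (simp add: euclid_norm_eq_sqrt_scalar_prod)
next
  case False
  define r where "r = euclid_norm v"
  have r: "r > 0"
    using False v conjugate_square_greater_0_vec[OF v]
    unfolding r_def euclid_norm_eq_sqrt_scalar_prod by simp
  have "euclid_norm ((1 / r) \<cdot>\<^sub>v v) = 1"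
    using r by (simp add: euclid_norm_smult r_def[symmetric])
  then have "euclid_norm (A *\<^sub>v ((1 / r) \<cdot>\<^sub>v v)) \<le> op_norm2 A"
    unfolding op_norm2_def using v by (intro cSup_upper[OF _ bdd_above_op_norm2]) auto
  moreover have "A *\<^sub>v ((1 / r) \<cdot>\<^sub>v v) = (1 / r) \<cdot>\<^sub>v (A *\<^sub>v v)"
    using v by (simp add: mult_mat_vec[OF carrier_matI[OF refl refl]])
  ultimately show ?thesis
    using r by (simp add: euclid_norm_smult r_def[symmetric] field_simps)
qed

lemma scalar_prod_le_mean_squares:
  fixes v w :: "real vec"
  assumes "w \<in> carrier_vec (dim_vec v)"
  shows "2 * (v \<bullet> w) \<le> v \<bullet> v + w \<bullet> w"
proof -
  have "2 * (v \<bullet> w) = (\<Sum>i<dim_vec v. 2 * (v $ i * w $ i))"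
    using assms unfolding scalar_prod_def by (simp add: sum_distrib_left atLeast0LessThan)
  also have "\<dots> \<le> (\<Sum>i<dim_vec v. v $ i * v $ i + w $ i * w $ i)"
    using sum_squares_bound[where 'a=real] by (intro sum_mono) (simp add: power2_eq_square mult.assoc)
  also have "\<dots> = v \<bullet> v + w \<bullet> w"
    using assms unfolding scalar_prod_def by (simp add: sum.distrib atLeast0LessThan)
  finally show ?thesis .
qed

lemma transpose_contraction_of_op_norm2_le_1:
  fixes G :: "real mat"
  assumes G: "G \<in> carrier_mat k m" and op: "op_norm2 G \<le> 1" and y: "y \<in> carrier_vec k"
  shows "(transpose_mat G *\<^sub>v y) \<bullet> (transpose_mat G *\<^sub>v y) \<le> y \<bullet> y"
proof -
  define z where "z = transpose_mat G *\<^sub>v y"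
  have z: "z \<in> carrier_vec m"
    using G y unfolding z_def by simp
  have "euclid_norm (G *\<^sub>v z) \<le> op_norm2 G * euclid_norm z"
    using G z by (intro euclid_norm_mult_mat_vec_le) auto
  also have "\<dots> \<le> euclid_norm z"
    using mult_right_mono[OF op, of "euclid_norm z"] by (simp add: euclid_norm_def sum_nonneg)
  finally have Gz: "(G *\<^sub>v z) \<bullet> (G *\<^sub>v z) \<le> z \<bullet> z"
    by (simp add: euclid_norm_eq_sqrt_scalar_prod)
  have "2 * (z \<bullet> z) = 2 * (y \<bullet> (G *\<^sub>v z))"
    using G y z unfolding z_def by (simp add: transpose_vec_mult_scalar)
  also have "\<dots> \<le> y \<bullet> y + (G *\<^sub>v z) \<bullet> (G *\<^sub>v z)"
    using G y z by (intro scalar_prod_le_mean_squares) auto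
  finally show ?thesis
    using Gz unfolding z_def by linarith
qed

lemma psd_one_minus_mult_transpose:
  assumes G: "G \<in> carrier_mat k m" and op: "op_norm2 G \<le> 1"
  shows "psd (1\<^sub>m k - G * transpose_mat G)"
proof (rule psdI)
  show "1\<^sub>m k - G * transpose_mat G \<in> carrier_mat k k"
    using G by (intro minus_carrier_mat) simp
  show "transpose_mat (1\<^sub>m k - G * transpose_mat G) = 1\<^sub>m k - G * transpose_mat G"
    using G by (simp add: transpose_minus[of _ k k] transpose_mult[of _ k m])
  fix x :: "real vec" assume x: "x \<in> carrier_vec k"
  have "x \<bullet> ((1\<^sub>m k - G * transpose_mat G) *\<^sub>v x) = x \<bullet> (x - G *\<^sub>v (transpose_mat G *\<^sub>v x))"
    using G x by (simp add: minus_mult_distrib_mat_vec[of _ k k])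
  also have "\<dots> = x \<bullet> x - x \<bullet> (G *\<^sub>v (transpose_mat G *\<^sub>v x))"
    using G x by (intro scalar_prod_minus_distrib) auto
  also have "x \<bullet> (G *\<^sub>v (transpose_mat G *\<^sub>v x)) = (transpose_mat G *\<^sub>v x) \<bullet> (transpose_mat G *\<^sub>v x)"
    using G x by (intro transpose_vec_mult_scalar[symmetric]) auto
  finally show "0 \<le> x \<bullet> ((1\<^sub>m k - G * transpose_mat G) *\<^sub>v x)"
    using transpose_contraction_of_op_norm2_le_1[OF G op x] by simp
qed

section \<open>Block matrices\<close>

lemma sum_lessThan_mult_blocks:
  fixes f :: "nat \<Rightarrow> 'a::comm_monoid_add"
  shows "(\<Sum>r<n * m. f r) = (\<Sum>i<n. \<Sum>a<m. f (i * m + a))"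
  by (simp add: sum.nat_group[symmetric] sum.shift_bounds_nat_ivl[of f 0, simplified] atLeast0LessThan add.commute)

lemma block_index:
  fixes i a :: nat
  assumes "i < n" and "a < m"
  shows "i * m + a < n * m" and "(i * m + a) div m = i" and "(i * m + a) mod m = a"
proof -
  have "i * m + a < Suc i * m"
    using assms(2) by simp
  also have "\<dots> \<le> n * m"
    using assms(1) by (intro mult_le_mono1) simp
  finally show "i * m + a < n * m" .
  show "(i * m + a) div m = i" and "(i * m + a) mod m = a"
    using assms(2) by simp_all
qed

lemma block_index_less:
  fixes r :: nat
  assumes "r < n * m"
  shows "r div m < n" and "r mod m < m"
proof -
  have "m > 0"
    using assms by (cases m) auto
  then show "r div m < n" and "r mod m < m"
    using assms by (simp_all add: less_mult_imp_div_less)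
qed

lemma quadratic_form_eq_sum:
  fixes A :: "'a::comm_semiring_0 mat"
  assumes "A \<in> carrier_mat n n" and "x \<in> carrier_vec n"
  shows "x \<bullet> (A *\<^sub>v x) = (\<Sum>i<n. \<Sum>j<n. x $ i * A $$ (i,j) * x $ j)"
  using assms by (simp add: scalar_prod_def atLeast0LessThan sum_distrib_left mult.assoc mult.left_commute)

definition block_diag_mat :: "nat \<Rightarrow> nat \<Rightarrow> (nat \<Rightarrow> 'a::zero mat) \<Rightarrow> 'a mat" where
  "block_diag_mat n m B = mat (n * m) (n * m) (\<lambda>(r, c).
     if r div m = c div m then B (r div m) $$ (r mod m, c mod m) else 0)"

lemma dim_block_diag_mat [simp]:
  "dim_row (block_diag_mat n m B) = n * m" "dim_col (block_diag_mat n m B) = n * m"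
  unfolding block_diag_mat_def by simp_all

lemma block_diag_mat_carrier [simp]: "block_diag_mat n m B \<in> carrier_mat (n * m) (n * m)"
  unfolding block_diag_mat_def by simp

lemma block_diag_mat_block_index:
  assumes "i < n" "a < m" "j < n" "b < m"
  shows "block_diag_mat n m B $$ (i * m + a, j * m + b) = (if i = j then B i $$ (a, b) else 0)"
  using assms block_index[of i n a m] block_index[of j n b m]
  unfolding block_diag_mat_def by simp

lemma quadratic_form_block_diag_mat:
  fixes B :: "nat \<Rightarrow> 'a::comm_semiring_0 mat"
  assumes B: "\<And>i. i < n \<Longrightarrow> B i \<in> carrier_mat m m" and x: "x \<in> carrier_vec (n * m)"
  shows "x \<bullet> (block_diag_mat n m B *\<^sub>v x)
    = (\<Sum>i<n. vec m (\<lambda>a. x $ (i * m + a)) \<bullet> (B i *\<^sub>v vec m (\<lambda>a. x $ (i * m + a))))"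
proof -
  let ?D = "block_diag_mat n m B"
  have "x \<bullet> (?D *\<^sub>v x) = (\<Sum>i<n. \<Sum>a<m. \<Sum>j<n. \<Sum>b<m.
      x $ (i * m + a) * ?D $$ (i * m + a, j * m + b) * x $ (j * m + b))"
    by (simp add: quadratic_form_eq_sum[OF block_diag_mat_carrier x] sum_lessThan_mult_blocks)
  also have "\<dots> = (\<Sum>i<n. \<Sum>a<m. \<Sum>b<m. x $ (i * m + a) * B i $$ (a, b) * x $ (i * m + b))"
  proof (rule sum.cong[OF refl], rule sum.cong[OF refl])
    fix i a assume i: "i \<in> {..<n}" and a: "a \<in> {..<m}"
    have "(\<Sum>j<n. \<Sum>b<m. x $ (i * m + a) * ?D $$ (i * m + a, j * m + b) * x $ (j * m + b))
      = (\<Sum>j<n. if j = i then \<Sum>b<m. x $ (i * m + a) * B i $$ (a, b) * x $ (i * m + b) else 0)"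
      using i a by (intro sum.cong refl) (auto simp: block_diag_mat_block_index)
    then show "(\<Sum>j<n. \<Sum>b<m. x $ (i * m + a) * ?D $$ (i * m + a, j * m + b) * x $ (j * m + b))
      = (\<Sum>b<m. x $ (i * m + a) * B i $$ (a, b) * x $ (i * m + b))"
      using i by simp
  qed
  also have "\<dots> = (\<Sum>i<n. vec m (\<lambda>a. x $ (i * m + a)) \<bullet> (B i *\<^sub>v vec m (\<lambda>a. x $ (i * m + a))))"
    by (intro sum.cong refl) (simp add: quadratic_form_eq_sum[OF B])
  finally show ?thesis .
qed

lemma psd_block_diag_mat:
  assumes B: "\<And>i. i < n \<Longrightarrow> B i \<in> carrier_mat m m" and psd: "\<And>i. i < n \<Longrightarrow> psd (B i)"
  shows "psd (block_diag_mat n m B)"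
proof (rule psdI)
  show "block_diag_mat n m B \<in> carrier_mat (n * m) (n * m)"
    by simp
  have sym: "B i $$ (b, a) = B i $$ (a, b)" if "i < n" "a < m" "b < m" for i a b
    using arg_cong[OF psdD(2)[OF psd], of i "\<lambda>M. M $$ (a, b)"] B[OF that(1)] that by simp
  show "transpose_mat (block_diag_mat n m B) = block_diag_mat n m B"
  proof (rule eq_matI)
    fix r c assume "r < dim_row (block_diag_mat n m B)" "c < dim_col (block_diag_mat n m B)"
    then have rc: "r < n * m" "c < n * m"
      by simp_all
    then show "transpose_mat (block_diag_mat n m B) $$ (r, c) = block_diag_mat n m B $$ (r, c)"
      using sym block_index_less[OF rc(1)] block_index_less[OF rc(2)]
      unfolding block_diag_mat_def by auto
  qed simp_all
  fix x :: "real vec" assume x: "x \<in> carrier_vec (n * m)"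
  have "0 \<le> vec m (\<lambda>a. x $ (i * m + a)) \<bullet> (B i *\<^sub>v vec m (\<lambda>a. x $ (i * m + a)))" if "i < n" for i
    using psdD(3)[OF psd[OF that]] B[OF that] by simp
  then show "0 \<le> x \<bullet> (block_diag_mat n m B *\<^sub>v x)"
    by (subst quadratic_form_block_diag_mat[OF B x]) (auto intro!: sum_nonneg)
qed

definition stacked_mat :: "nat \<Rightarrow> nat \<Rightarrow> (nat \<Rightarrow> 'a mat) \<Rightarrow> 'a mat" where
  "stacked_mat n m \<Gamma> = mat (n * m) m (\<lambda>(r, k). \<Gamma> (r div m) $$ (r mod m, k))"

lemma block_P_eq_stacked_plus_block_diag:
  assumes \<Gamma>: "\<And>i. i < n \<Longrightarrow> \<Gamma> i \<in> carrier_mat m m"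
  shows "block_P n m \<Gamma> = stacked_mat n m \<Gamma> * transpose_mat (stacked_mat n m \<Gamma>)
    + block_diag_mat n m (\<lambda>i. 1\<^sub>m m - \<Gamma> i * transpose_mat (\<Gamma> i))"
proof (rule eq_matI)
  fix r c assume "r < dim_row (stacked_mat n m \<Gamma> * transpose_mat (stacked_mat n m \<Gamma>)
    + block_diag_mat n m (\<lambda>i. 1\<^sub>m m - \<Gamma> i * transpose_mat (\<Gamma> i)))"
    and "c < dim_col (stacked_mat n m \<Gamma> * transpose_mat (stacked_mat n m \<Gamma>)
    + block_diag_mat n m (\<lambda>i. 1\<^sub>m m - \<Gamma> i * transpose_mat (\<Gamma> i)))"
  then have rc: "r < n * m" "c < n * m"
    by simp_all
  then have "r div m < n" "c div m < n" "r mod m < m" "c mod m < m"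
    by (simp_all add: block_index_less)
  then show "block_P n m \<Gamma> $$ (r, c) = (stacked_mat n m \<Gamma> * transpose_mat (stacked_mat n m \<Gamma>)
    + block_diag_mat n m (\<lambda>i. 1\<^sub>m m - \<Gamma> i * transpose_mat (\<Gamma> i))) $$ (r, c)"
    using rc \<Gamma>[of "r div m"] \<Gamma>[of "c div m"]
    unfolding block_P_def stacked_mat_def block_diag_mat_def
    by (simp add: Let_def scalar_prod_def)
qed (simp_all add: block_P_def)

lemma trace_block_P: "trace (block_P n m \<Gamma>) = real (n * m)"
proof -
  have "block_P n m \<Gamma> $$ (r, r) = 1" if "r < n * m" for r
    using that unfolding block_P_def by (cases m) auto
  then show ?thesis
    unfolding trace_def by (simp add: block_P_def)
qed

theorem lemma18:
  fixes n m :: nat and \<Gamma> :: "nat \<Rightarrow> real mat"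
  assumes \<Gamma>: "\<And>i. i < n \<Longrightarrow> \<Gamma> i \<in> carrier_mat m m"
      and op: "\<And>i. i < n \<Longrightarrow> op_norm2 (\<Gamma> i) \<le> 1"
  shows "psd (block_P n m \<Gamma>) \<and> nuclear_norm (block_P n m \<Gamma>) \<le> real (m * n)"
proof -
  have S: "stacked_mat n m \<Gamma> \<in> carrier_mat (n * m) m"
    by (simp add: stacked_mat_def)
  have "psd (stacked_mat n m \<Gamma> * transpose_mat (stacked_mat n m \<Gamma>)
      + block_diag_mat n m (\<lambda>i. 1\<^sub>m m - \<Gamma> i * transpose_mat (\<Gamma> i)))"
  proof (rule psd_add)
    show "psd (stacked_mat n m \<Gamma> * transpose_mat (stacked_mat n m \<Gamma>))"
      using S by (rule psd_mult_transpose)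
    show "psd (block_diag_mat n m (\<lambda>i. 1\<^sub>m m - \<Gamma> i * transpose_mat (\<Gamma> i)))"
      using \<Gamma> op
      by (intro psd_block_diag_mat psd_one_minus_mult_transpose minus_carrier_mat)
        (auto intro!: mult_carrier_mat[of _ m m])
  qed (use S in simp)
  then have psd: "psd (block_P n m \<Gamma>)"
    using block_P_eq_stacked_plus_block_diag[of n \<Gamma> m] \<Gamma> by simp
  moreover have "nuclear_norm (block_P n m \<Gamma>) = real (m * n)"
    using nuclear_norm_psd[OF psd] trace_block_P by (simp add: mult.commute)
  ultimately show ?thesis
    by simp
qed

end
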